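(* Let $X$ be a path-connected locally equiconnected space (i.e. the diagonal $X\to X\times X$ is a closed cofibration) and let $x_0\in X$. Then $\mathrm{TC}(X)=\mathrm{TC}^*(X)$, where $\mathrm{TC}^*$ is computed with base point $x_0$.
   Context: $\mathrm{TC}(X)$ (Farber's topological complexity) is the least $k$ such that $X\times X$ has an open cover $U_0,\dots,U_k$ with each $U_i$ admitting a continuous section $s_i:U_i\to X^I$ of $\pi:X^I\to X\times X$, $\pi(\gamma)=(\gamma(0),\gamma(1))$ (i.e. $\pi\circ s_i$ is the inclusion). The pointed topological complexity $\mathrm{TC}^*(X)$ of $(X,x_0)$ is the least $k$ (or $\infty$) such that $X\times X$ has an open cover $U_0,\dots,U_k$ with $(x_0,x_0)\in U_i$ for all $i$ and continuous sections $s_i:U_i\to X^I$ of $\pi$ with $s_i(x_0,x_0)=c_{x_0}$, the constant path at $x_0$. *)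

theory Defs
  imports "HOL-Analysis.Analysis" "HOL-Library.Extended_Nat"
begin

abbreviation unit_interval :: "real topology" where
  "unit_interval \<equiv> top_of_set {0..1}"

text \<open>Test spaces range over topologies on the
  type 'a \<times> real, which contains the universal test space Y \<times> 0 \<union> A \<times> I.\<close>
definition cofibration :: "'a topology \<Rightarrow> 'a set \<Rightarrow> bool" where
  "cofibration Y A \<longleftrightarrow> A \<subseteq> topspace Y \<and>
     (\<forall>(Z :: ('a \<times> real) topology) f h.
        continuous_map Y Z f \<and>
        continuous_map (prod_topology (subtopology Y A) unit_interval) Z h \<and>
        (\<forall>a\<in>A. h (a, 0) = f a)
        \<longrightarrow> (\<exists>H. continuous_map (prod_topology Y unit_interval) Z H \<and>
                 (\<forall>y\<in>topspace Y. H (y, 0) = f y) \<and>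
                 (\<forall>a\<in>A. \<forall>t\<in>{0..1}. H (a, t) = h (a, t))))"

definition locally_equiconnected :: "'a topology \<Rightarrow> bool" where
  "locally_equiconnected X \<longleftrightarrow>
     (let D = {(x, x) | x. x \<in> topspace X}
      in closedin (prod_topology X X) D \<and> cofibration (prod_topology X X) D)"

text \<open>A continuous section U \<rightarrow> X^I of the endpoint map, in adjoint form:
  a continuous map U \<times> I \<rightarrow> X (exponential law; I is compact Hausdorff).\<close>
definition motion_planner :: "'a topology \<Rightarrow> ('a \<times> 'a) set \<Rightarrow> (('a \<times> 'a) \<times> real \<Rightarrow> 'a) \<Rightarrow> bool" where
  "motion_planner X U s \<longleftrightarrow>
     continuous_map (prod_topology (subtopology (prod_topology X X) U) unit_interval) X s \<and>
     (\<forall>a b. (a, b) \<in> U \<longrightarrow> s ((a, b), 0) = a \<and> s ((a, b), 1) = b)"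

definition tc_cover :: "'a topology \<Rightarrow> nat \<Rightarrow> bool" where
  "tc_cover X k \<longleftrightarrow>
     (\<exists>(U :: nat \<Rightarrow> ('a \<times> 'a) set) s.
        (\<forall>i\<le>k. openin (prod_topology X X) (U i) \<and> motion_planner X (U i) (s i)) \<and>
        topspace (prod_topology X X) \<subseteq> (\<Union>i\<le>k. U i))"

definition tc_pointed_cover :: "'a topology \<Rightarrow> 'a \<Rightarrow> nat \<Rightarrow> bool" where
  "tc_pointed_cover X x0 k \<longleftrightarrow>
     (\<exists>(U :: nat \<Rightarrow> ('a \<times> 'a) set) s.
        (\<forall>i\<le>k. openin (prod_topology X X) (U i) \<and> motion_planner X (U i) (s i) \<and>
               (x0, x0) \<in> U i \<and> (\<forall>t\<in>{0..1}. s i ((x0, x0), t) = x0)) \<and>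
        topspace (prod_topology X X) \<subseteq> (\<Union>i\<le>k. U i))"

text \<open>Farber's topological complexity (reduced convention), \<infinity> if no finite cover exists.\<close>
definition TC :: "'a topology \<Rightarrow> enat" where
  "TC X = (if \<exists>k. tc_cover X k then enat (LEAST k. tc_cover X k) else \<infinity>)"

definition TC_pointed :: "'a topology \<Rightarrow> 'a \<Rightarrow> enat" where
  "TC_pointed X x0 = (if \<exists>k. tc_pointed_cover X x0 k
                      then enat (LEAST k. tc_pointed_cover X x0 k) else \<infinity>)"

end

theory Submission imports Defs begin

(* By the homotopy extension property of the diagonal, a locally equiconnected space has a
   motion planner on a neighbourhood of the diagonal that is stationary on the diagonal.
   Restricted to paths ending at x0 it gives a homotopy A, fixing x0, from the identity to a
   map collapsing a neighbourhood of x0 onto x0.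

   Given open sets U_0, ..., U_k covering X x X with motion planners, pull them back along
   (a, b) |-> (A (a, 1), A' (b, 1)) and join a to b by running to A (a, 1), following the old
   planner and returning.  The chart containing (x0, x0) traces a loop gam at x0; building gam
   into the second homotopy A' and truncating the planner near (x0, x0) makes it stationary at
   (x0, x0).  Every other chart is enlarged by a small neighbourhood of (x0, x0) on which paths
   are routed through x0 by A.  This yields a pointed cover with the same number of charts. *)

definition cutoff :: "real \<Rightarrow> real \<Rightarrow> real \<Rightarrow> real" where
  "cutoff a b r = max 0 (min 1 ((b - r) / (b - a)))"

lemma cutoff_nonneg [simp]: "0 \<le> cutoff a b r"
  and cutoff_le_one [simp]: "cutoff a b r \<le> 1"
  by (simp_all add: cutoff_def)

lemma cutoff_eq_1: "a < b \<Longrightarrow> r \<le> a \<Longrightarrow> cutoff a b r = 1"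
  by (simp add: cutoff_def)

lemma cutoff_eq_0: "a < b \<Longrightarrow> b \<le> r \<Longrightarrow> cutoff a b r = 0"
  by (simp add: cutoff_def divide_nonpos_pos)

lemma cutoff_pos_imp_less: "a < b \<Longrightarrow> 0 < cutoff a b r \<Longrightarrow> r < b"
  using cutoff_eq_0[of a b r] by (cases "b \<le> r") auto

lemma continuous_map_cutoff [continuous_intros]:
  "continuous_map Z euclideanreal f \<Longrightarrow> continuous_map Z euclideanreal (\<lambda>z. cutoff a b (f z))"
  unfolding cutoff_def divide_inverse by (intro continuous_intros)

lemma mult_unit_interval: "s \<in> {0..1} \<Longrightarrow> t \<in> {0..1} \<Longrightarrow> s * (t::real) \<in> {0..1}"
  by (auto intro: mult_le_one)

lemma continuous_map_paste_openin:
  assumes "openin Z S" "openin Z T" "topspace Z \<subseteq> S \<union> T"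
    and "continuous_map (subtopology Z S) Y f" "continuous_map (subtopology Z T) Y g"
    and "\<And>x. x \<in> topspace Z \<Longrightarrow> x \<in> S \<Longrightarrow> h x = f x"
    and "\<And>x. x \<in> topspace Z \<Longrightarrow> x \<in> T \<Longrightarrow> h x = g x"
  shows "continuous_map Z Y h"
proof (rule pasting_lemma[where I = "{True, False}" and T = "\<lambda>b. if b then S else T"
      and f = "\<lambda>b. if b then f else g"])
  show "\<exists>j. j \<in> {True, False} \<and> x \<in> (if j then S else T) \<and> h x = (if j then f else g) x"
    if "x \<in> topspace Z" for x
    using that assms(3,6,7) by (cases "x \<in> S") auto
  show "(if i then f else g) x = (if j then f else g) x"
    if "i \<in> {True, False}" "j \<in> {True, False}"
      "x \<in> topspace Z \<inter> (if i then S else T) \<inter> (if j then S else T)" for i j x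
  proof -
    have "f x = g x" if "x \<in> topspace Z" "x \<in> S" "x \<in> T"
      using assms(6)[OF that(1,2)] assms(7)[OF that(1,3)] by simp
    with that show ?thesis
      by (cases i; cases j) auto
  qed
qed (use assms(1,2,4,5) in auto)

lemma continuous_map_snd_unit_interval [continuous_intros]:
  "continuous_map (prod_topology Z unit_interval) euclideanreal snd"
  using continuous_map_into_fulltopology[OF continuous_map_snd] .

lemma continuous_map_prod_subtopology_inclusion:
  "continuous_map (prod_topology (subtopology Y S) Z) (prod_topology Y Z) (\<lambda>p. p)"
  unfolding prod_topology_subtopology(1) by (rule continuous_map_from_subtopology) simp

lemma continuous_map_pair_unit_interval:
  "continuous_map W Z f \<Longrightarrow> continuous_map W euclideanreal g \<Longrightarrow>
   (\<And>w. w \<in> topspace W \<Longrightarrow> g w \<in> {0..1}) \<Longrightarrow>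
   continuous_map W (prod_topology Z unit_interval) (\<lambda>w. (f w, g w))"
  by (auto intro: continuous_map_pairedI simp: continuous_map_in_subtopology)

lemma continuous_map_compose_family:
  assumes "continuous_map (prod_topology Y unit_interval) X F"
    and "continuous_map Z Y f" "continuous_map Z euclideanreal g" "\<And>z. z \<in> topspace Z \<Longrightarrow> g z \<in> {0..1}"
  shows "continuous_map Z X (\<lambda>z. F (f z, g z))"
  using continuous_map_compose[OF continuous_map_pair_unit_interval[OF assms(2-4)] assms(1)]
  by (simp add: o_def)

lemma continuous_map_endpoints_of_family:
  "continuous_map (prod_topology (subtopology (prod_topology X X) W) Z) X (\<lambda>p. fst (fst p))"
  "continuous_map (prod_topology (subtopology (prod_topology X X) W) Z) X (\<lambda>p. snd (fst p))"
  using continuous_map_compose[OF continuous_map_into_fulltopology[OF continuous_map_fst] continuous_map_fst]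
    continuous_map_compose[OF continuous_map_into_fulltopology[OF continuous_map_fst] continuous_map_snd]
  by (simp_all add: o_def)

section \<open>Concatenation of families of paths\<close>

definition concat_family :: "('z \<times> real \<Rightarrow> 'a) \<Rightarrow> ('z \<times> real \<Rightarrow> 'a) \<Rightarrow> 'z \<times> real \<Rightarrow> 'a" where
  "concat_family f g p = (if snd p \<le> 1/2 then f (fst p, 2 * snd p) else g (fst p, 2 * snd p - 1))"

lemma concat_family_0 [simp]: "concat_family f g (z, 0) = f (z, 0)"
  and concat_family_1 [simp]: "concat_family f g (z, 1) = g (z, 1)"
  by (simp_all add: concat_family_def)

lemma concat_family_const:
  assumes "\<And>s. s \<in> {0..1} \<Longrightarrow> f (z, s) = c" "\<And>s. s \<in> {0..1} \<Longrightarrow> g (z, s) = c"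
    and "t \<in> {0..1}"
  shows "concat_family f g (z, t) = c"
  using assms by (simp add: concat_family_def)

lemma continuous_map_concat_family:
  assumes f: "continuous_map (prod_topology Z unit_interval) X f"
    and g: "continuous_map (prod_topology Z unit_interval) X g"
    and fg: "\<And>z. z \<in> topspace Z \<Longrightarrow> f (z, 1) = g (z, 0)"
  shows "continuous_map (prod_topology Z unit_interval) X (concat_family f g)"
  unfolding concat_family_def
proof (rule continuous_map_cases_le)
  let ?P = "prod_topology Z unit_interval"
  have fst: "continuous_map (subtopology ?P S) Z fst" for S
    by (simp add: continuous_map_from_subtopology continuous_map_fst)
  have snd: "continuous_map (subtopology ?P S) euclideanreal snd" for S
    by (intro continuous_map_from_subtopology continuous_intros)
  show "continuous_map (subtopology ?P {p \<in> topspace ?P. snd p \<le> 1/2}) X (\<lambda>p. f (fst p, 2 * snd p))"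
    by (rule continuous_map_compose_family[OF f fst]) (auto intro!: snd continuous_intros)
  show "continuous_map (subtopology ?P {p \<in> topspace ?P. 1/2 \<le> snd p}) X (\<lambda>p. g (fst p, 2 * snd p - 1))"
    by (rule continuous_map_compose_family[OF g fst]) (auto intro!: snd continuous_intros)
  show "f (fst p, 2 * snd p) = g (fst p, 2 * snd p - 1)"
    if "p \<in> topspace ?P" "snd p = 1/2" for p
  proof -
    have "2 * snd p = 1" "fst p \<in> topspace Z"
      using that by (auto simp: mem_Times_iff)
    then show ?thesis
      using fg by simp
  qed
qed (intro continuous_intros)+

lemma motion_planner_Un_disjoint:
  assumes S: "openin (prod_topology X X) S" and T: "openin (prod_topology X X) T"
    and "S \<inter> T = {}"
    and s: "motion_planner X S s" and t: "motion_planner X T t"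
  shows "motion_planner X (S \<union> T) (\<lambda>p. if fst p \<in> S then s p else t p)"
proof -
  let ?Q = "\<lambda>W. prod_topology (subtopology (prod_topology X X) W) unit_interval"
  let ?part = "\<lambda>W. {p \<in> topspace (?Q (S \<union> T)). fst p \<in> W}"
  have part: "subtopology (?Q (S \<union> T)) (?part W) = ?Q W" if "W \<subseteq> S \<union> T" for W
  proof -
    have "?part W = topspace (?Q (S \<union> T)) \<inter> (W \<times> UNIV)"
      by auto
    then have "subtopology (?Q (S \<union> T)) (?part W) = subtopology (?Q (S \<union> T)) (W \<times> UNIV)"
      by (metis subtopology_restrict)
    then show ?thesis
      using that by (simp add: subtopology_Times subtopology_subtopology Int_absorb1)
  qed
  have opn: "openin (?Q (S \<union> T)) (?part W)" if "openin (prod_topology X X) W" for W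
    using continuous_map_into_fulltopology[OF continuous_map_fst] that
    by (rule openin_continuous_map_preimage)
  have "continuous_map (?Q (S \<union> T)) X (\<lambda>p. if fst p \<in> S then s p else t p)"
  proof (rule continuous_map_paste_openin[OF opn[OF S] opn[OF T]])
    show "continuous_map (subtopology (?Q (S \<union> T)) (?part S)) X s"
      using s by (subst part) (auto simp: motion_planner_def)
    show "continuous_map (subtopology (?Q (S \<union> T)) (?part T)) X t"
      using t by (subst part) (auto simp: motion_planner_def)
  qed (use \<open>S \<inter> T = {}\<close> in auto)
  then show ?thesis
    using s t by (auto simp: motion_planner_def)
qed

definition pointed_chart :: "'a topology \<Rightarrow> 'a \<Rightarrow> ('a \<times> 'a) set \<Rightarrow> (('a \<times> 'a) \<times> real \<Rightarrow> 'a) \<Rightarrow> bool"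
  where "pointed_chart X x0 U s \<longleftrightarrow> openin (prod_topology X X) U \<and> motion_planner X U s \<and>
    (x0, x0) \<in> U \<and> (\<forall>t\<in>{0..1}. s ((x0, x0), t) = x0)"

lemma tc_pointed_cover_iff_pointed_charts:
  "tc_pointed_cover X x0 k \<longleftrightarrow> (\<exists>U s. (\<forall>i\<le>k. pointed_chart X x0 (U i) (s i)) \<and>
     topspace (prod_topology X X) \<subseteq> (\<Union>i\<le>k. U i))"
  unfolding tc_pointed_cover_def pointed_chart_def by blast

lemma tc_pointed_cover_imp_tc_cover: "tc_pointed_cover X x0 k \<Longrightarrow> tc_cover X k"
  unfolding tc_pointed_cover_def tc_cover_def by blast

section \<open>Locally equiconnected spaces\<close>

lemma cofibration_imp_retract_of_space:
  assumes "cofibration Y A"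
  shows "(topspace Y \<times> {0} \<union> A \<times> {0..1}) retract_of_space prod_topology Y unit_interval"
proof -
  let ?T = "topspace Y \<times> {0} \<union> A \<times> {0..1}"
  let ?Z = "subtopology (prod_topology Y unit_interval) ?T"
  have A: "A \<subseteq> topspace Y"
    using assms by (simp add: cofibration_def)
  have "continuous_map Y ?Z (\<lambda>y. (y, 0))"
  proof (rule continuous_map_into_subtopology)
    show "continuous_map Y (prod_topology Y unit_interval) (\<lambda>y. (y, 0))"
      by (rule continuous_map_pairedI) auto
  qed auto
  moreover have "continuous_map (prod_topology (subtopology Y A) unit_interval) ?Z (\<lambda>p. p)"
    by (rule continuous_map_into_subtopology[OF continuous_map_prod_subtopology_inclusion]) auto
  ultimately obtain H where H: "continuous_map (prod_topology Y unit_interval) ?Z H"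
    and H0: "\<forall>y\<in>topspace Y. H (y, 0) = (y, 0)" and HA: "\<forall>a\<in>A. \<forall>t\<in>{0..1}. H (a, t) = (a, t)"
    using assms[unfolded cofibration_def, THEN conjunct2, rule_format, of ?Z "\<lambda>y. (y, 0)" "\<lambda>p. p"]
    by auto
  have "?T \<subseteq> topspace (prod_topology Y unit_interval)"
    using A by auto
  moreover have "H x = x" if "x \<in> ?T" for x
    using that H0 HA by auto
  ultimately show ?thesis
    unfolding retract_of_space_def using H by blast
qed

definition retraction_planner :: "(('a \<times> 'a) \<times> real \<Rightarrow> ('a \<times> 'a) \<times> real) \<Rightarrow> ('a \<times> 'a) \<times> real \<Rightarrow> 'a"
  where "retraction_planner R =
    concat_family (\<lambda>p. fst (fst (R p))) (\<lambda>p. snd (fst (R (fst p, 1 - snd p))))"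

(* R (z, -) runs from (z, 0) to R (z, 1); when that point lies on the diagonal, following the
   first coordinate and then the second one backwards joins fst z to snd z. *)
lemma motion_planner_retraction_planner:
  assumes R: "continuous_map (prod_topology (prod_topology X X) unit_interval)
      (prod_topology (prod_topology X X) unit_interval) R"
    and R_0: "\<And>z. z \<in> topspace (prod_topology X X) \<Longrightarrow> R (z, 0) = (z, 0)"
    and R_1: "\<And>z. z \<in> topspace (prod_topology X X) \<Longrightarrow> 0 < snd (R (z, 1)) \<Longrightarrow>
      fst (fst (R (z, 1))) = snd (fst (R (z, 1)))"
  shows "motion_planner X {z \<in> topspace (prod_topology X X). 0 < snd (R (z, 1))} (retraction_planner R)"
proof -
  let ?Y = "prod_topology X X"
  let ?NI = "prod_topology (subtopology ?Y {z \<in> topspace ?Y. 0 < snd (R (z, 1))}) unit_interval"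
  have "continuous_map ?NI X (retraction_planner R)"
    unfolding retraction_planner_def
  proof (rule continuous_map_concat_family)
    show "continuous_map ?NI X (\<lambda>p. fst (fst (R p)))"
      using continuous_map_compose[OF continuous_map_prod_subtopology_inclusion
          continuous_map_fst_of[OF continuous_map_fst_of[OF R]]]
      by (simp add: o_def)
    show "continuous_map ?NI X (\<lambda>p. snd (fst (R (fst p, 1 - snd p))))"
      by (rule continuous_map_compose_family[OF continuous_map_snd_of[OF continuous_map_fst_of[OF R]]
            continuous_map_into_fulltopology[OF continuous_map_fst], unfolded o_def])
        (auto intro: continuous_intros)
  qed (use R_1 in simp)
  then show ?thesis
    using R_0 by (auto simp: motion_planner_def retraction_planner_def)
qed

lemma locally_equiconnected_imp_diagonal_planner:
  assumes "locally_equiconnected X"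
  obtains phi lam where
    "continuous_map (prod_topology X X) euclideanreal phi"
    "\<And>x. x \<in> topspace X \<Longrightarrow> phi (x, x) = 0"
    "motion_planner X {z \<in> topspace (prod_topology X X). phi z < 1} lam"
    "\<And>x t. x \<in> topspace X \<Longrightarrow> t \<in> {0..1} \<Longrightarrow> lam ((x, x), t) = x"
proof -
  let ?Y = "prod_topology X X"
  let ?YI = "prod_topology ?Y unit_interval"
  define D where "D = {(x, x) | x. x \<in> topspace X}"
  define T where "T = topspace ?Y \<times> {0::real} \<union> D \<times> {0..1}"
  have "T retract_of_space ?YI"
    using assms unfolding T_def
    by (intro cofibration_imp_retract_of_space) (simp add: locally_equiconnected_def D_def Let_def)
  then obtain R where R_T: "continuous_map ?YI (subtopology ?YI T) R" and RT: "\<And>p. p \<in> T \<Longrightarrow> R p = p"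
    unfolding retract_of_space_def by blast
  have R: "continuous_map ?YI ?YI R"
    using R_T by (rule continuous_map_into_fulltopology)
  have diagonal: "fst (fst (R (z, 1))) = snd (fst (R (z, 1)))"
    if "z \<in> topspace ?Y" "0 < snd (R (z, 1))" for z
  proof -
    have "R (z, 1) \<in> T"
      using R_T that(1) by (auto simp: continuous_map_in_subtopology)
    then show ?thesis
      using that(2) by (auto simp: T_def D_def)
  qed
  have fixed: "R p = p" if "p \<in> topspace ?Y \<times> {0} \<union> D \<times> {0..1}" for p
    using that RT by (simp add: T_def)
  define phi where "phi z = 1 - snd (R (z, 1))" for z
  have "continuous_map ?Y ?YI (\<lambda>z. (z, 1))"
    by (auto intro!: continuous_map_pairedI)
  then have "continuous_map ?Y euclideanreal phi"
    using continuous_map_compose[OF continuous_map_compose[OF _ R] continuous_map_snd_unit_interval]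
    unfolding phi_def by (intro continuous_intros) (simp add: o_def)
  moreover have "motion_planner X {z \<in> topspace ?Y. phi z < 1} (retraction_planner R)"
    using motion_planner_retraction_planner[OF R _ diagonal] fixed by (simp add: phi_def)
  moreover have "phi (x, x) = 0" if "x \<in> topspace X" for x
    using that fixed[of "((x, x), 1)"] by (simp add: phi_def D_def)
  moreover have "retraction_planner R ((x, x), t) = x" if "x \<in> topspace X" "t \<in> {0..1}" for x t
    unfolding retraction_planner_def using that fixed
    by (intro concat_family_const) (auto simp: D_def)
  ultimately show ?thesis
    using that by blast
qed

locale based_collapse =
  fixes X :: "'a topology" and x0 :: 'a and phi :: "'a \<Rightarrow> real" and A :: "'a \<times> real \<Rightarrow> 'a"
  assumes x0_in: "x0 \<in> topspace X"
    and continuous_phi: "continuous_map X euclideanreal phi"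
    and phi_x0: "phi x0 = 0"
    and continuous_A: "continuous_map (prod_topology X unit_interval) X A"
    and A_0: "\<And>x. x \<in> topspace X \<Longrightarrow> A (x, 0) = x"
    and A_1: "\<And>x. x \<in> topspace X \<Longrightarrow> phi x \<le> 1 \<Longrightarrow> A (x, 1) = x0"
    and A_x0: "\<And>t. t \<in> {0..1} \<Longrightarrow> A (x0, t) = x0"

lemma locally_equiconnected_imp_based_collapse:
  assumes "locally_equiconnected X" and x0: "x0 \<in> topspace X"
  obtains phi A where "based_collapse X x0 phi A"
proof -
  let ?XI = "prod_topology X unit_interval"
  obtain psi lam where cont_psi: "continuous_map (prod_topology X X) euclideanreal psi"
    and psi_diag: "\<And>x. x \<in> topspace X \<Longrightarrow> psi (x, x) = 0"
    and lam: "motion_planner X {z \<in> topspace (prod_topology X X). psi z < 1} lam"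
    and lam_diag: "\<And>x t. x \<in> topspace X \<Longrightarrow> t \<in> {0..1} \<Longrightarrow> lam ((x, x), t) = x"
    using locally_equiconnected_imp_diagonal_planner[OF assms(1)] by blast
  define N where "N = {z \<in> topspace (prod_topology X X). psi z < 1}"
  have cont_psi_x0: "continuous_map ?XI euclideanreal (\<lambda>p. psi (fst p, x0))"
    using x0 by (intro continuous_map_compose[OF _ cont_psi, unfolded o_def] continuous_map_pairedI
        continuous_map_fst) auto
  define kap where "kap x = cutoff (1/4) (1/2) (psi (x, x0))" for x
  define A where "A p = (if psi (fst p, x0) \<le> 1/2 then lam ((fst p, x0), snd p * kap (fst p)) else fst p)"
    for p
  have lam_0: "lam ((x, x0), 0) = x" if "x \<in> topspace X" "psi (x, x0) < 1" for x
    using lam that x0 by (simp add: motion_planner_def)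
  have "continuous_map ?XI X A"
    unfolding A_def
  proof (rule continuous_map_cases_le[OF cont_psi_x0])
    let ?S = "{p \<in> topspace ?XI. psi (fst p, x0) \<le> 1/2}"
    have "continuous_map (subtopology ?XI ?S) (subtopology (prod_topology X X) N) (\<lambda>p. (fst p, x0))"
      using x0 by (auto simp: continuous_map_in_subtopology N_def
          intro!: continuous_map_pairedI continuous_map_from_subtopology continuous_map_fst)
    moreover have "continuous_map (subtopology ?XI ?S) euclideanreal (\<lambda>p. snd p * kap (fst p))"
      unfolding kap_def by (intro continuous_intros continuous_map_from_subtopology cont_psi_x0)
    ultimately show "continuous_map (subtopology ?XI ?S) X (\<lambda>p. lam ((fst p, x0), snd p * kap (fst p)))"
      using lam unfolding motion_planner_def N_def[symmetric]
      by (intro continuous_map_compose_family) (auto simp: kap_def intro!: mult_le_one)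
    show "continuous_map (subtopology ?XI {p \<in> topspace ?XI. 1/2 \<le> psi (fst p, x0)}) X fst"
      by (rule continuous_map_from_subtopology[OF continuous_map_fst])
  qed (auto simp: kap_def cutoff_eq_0 lam_0)
  moreover have "A (x, 1) = x0" if "x \<in> topspace X" "psi (x, x0) \<le> 1/4" for x
    using lam that x0 by (auto simp: A_def kap_def cutoff_eq_1 motion_planner_def)
  moreover have "A (x0, t) = x0" if "t \<in> {0..1}" for t
    using that x0 psi_diag[OF x0] lam_diag[OF x0] by (simp add: A_def kap_def cutoff_eq_1)
  moreover have "continuous_map X euclideanreal (\<lambda>x. 4 * psi (x, x0))"
    using x0 by (intro continuous_intros continuous_map_compose[OF _ cont_psi, unfolded o_def]
        continuous_map_pairedI) auto
  ultimately have "based_collapse X x0 (\<lambda>x. 4 * psi (x, x0)) A"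
    using x0 psi_diag[OF x0] by unfold_locales (auto simp: A_def lam_0)
  then show ?thesis ..
qed

section \<open>From a cover to a pointed cover\<close>

context based_collapse
begin

lemma continuous_map_A_compose:
  "continuous_map Z X f \<Longrightarrow> continuous_map Z euclideanreal g \<Longrightarrow> (\<And>z. z \<in> topspace Z \<Longrightarrow> g z \<in> {0..1}) \<Longrightarrow>
   continuous_map Z X (\<lambda>z. A (f z, g z))"
  by (rule continuous_map_compose_family[OF continuous_A])

lemma continuous_map_A_families:
  "continuous_map (prod_topology (subtopology (prod_topology X X) W) unit_interval) X (\<lambda>p. A (fst (fst p), snd p))"
  "continuous_map (prod_topology (subtopology (prod_topology X X) W) unit_interval) X
     (\<lambda>p. A (snd (fst p), 1 - snd p))"
  by (rule continuous_map_A_compose[OF continuous_map_endpoints_of_family(1)];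
      auto intro: continuous_intros)
    (rule continuous_map_A_compose[OF continuous_map_endpoints_of_family(2)];
      auto intro: continuous_intros)

definition pair_gauge :: "'a \<times> 'a \<Rightarrow> real" where
  "pair_gauge z = max (phi (fst z)) (phi (snd z))"

lemma continuous_pair_gauge: "continuous_map (prod_topology X X) euclideanreal pair_gauge"
  unfolding pair_gauge_def
  by (intro continuous_intros continuous_map_compose[OF _ continuous_phi, unfolded o_def]
      continuous_map_fst continuous_map_snd)

definition via_base_planner :: "('a \<times> 'a) \<times> real \<Rightarrow> 'a" where
  "via_base_planner = concat_family (\<lambda>p. A (fst (fst p), snd p)) (\<lambda>p. A (snd (fst p), 1 - snd p))"

lemma motion_planner_via_base_planner:
  assumes "W \<subseteq> {z \<in> topspace (prod_topology X X). pair_gauge z \<le> 1}"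
  shows "motion_planner X W via_base_planner"
proof -
  have "continuous_map (prod_topology (subtopology (prod_topology X X) W) unit_interval) X via_base_planner"
    unfolding via_base_planner_def using continuous_map_A_families
    by (rule continuous_map_concat_family) (use assms in \<open>auto simp: A_1 pair_gauge_def\<close>)
  then show ?thesis
    using assms by (auto simp: motion_planner_def via_base_planner_def A_0)
qed

lemma via_base_planner_base: "t \<in> {0..1} \<Longrightarrow> via_base_planner ((x0, x0), t) = x0"
  unfolding via_base_planner_def by (rule concat_family_const) (auto simp: A_x0)

definition base_weight :: "'a \<times> 'a \<Rightarrow> real" where
  "base_weight z = cutoff 0 (1/4) (pair_gauge z)"

lemma continuous_base_weight: "continuous_map (prod_topology X X) euclideanreal base_weight"
  unfolding base_weight_def by (intro continuous_intros continuous_pair_gauge)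

lemma base_weight_range: "base_weight z \<in> {0..1}"
  by (simp add: base_weight_def)

lemma base_weight_base: "base_weight (x0, x0) = 1"
  by (simp add: base_weight_def pair_gauge_def phi_x0 cutoff_eq_1)

lemma base_weight_pos_imp: "0 < base_weight z \<Longrightarrow> pair_gauge z < 1/4"
  unfolding base_weight_def by (rule cutoff_pos_imp_less) auto

end

locale based_collapse_loop = based_collapse +
  fixes gam :: "real \<Rightarrow> 'a"
  assumes continuous_gam: "continuous_map unit_interval X gam"
    and gam_0: "gam 0 = x0" and gam_1: "gam 1 = x0"
begin

definition loop_homotopy :: "'a \<times> real \<Rightarrow> 'a" where
  "loop_homotopy p = (if phi (fst p) \<le> 1 then gam (snd p * cutoff (1/4) (1/2) (phi (fst p)))
                      else A (fst p, 1))"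

lemma continuous_loop_homotopy: "continuous_map (prod_topology X unit_interval) X loop_homotopy"
  unfolding loop_homotopy_def
proof (rule continuous_map_cases_le)
  let ?XI = "prod_topology X unit_interval"
  show phi_fst: "continuous_map ?XI euclideanreal (\<lambda>p. phi (fst p))"
    using continuous_map_compose[OF continuous_map_fst continuous_phi] by (simp add: o_def)
  have "continuous_map ?XI euclideanreal (\<lambda>p. snd p * cutoff (1/4) (1/2) (phi (fst p)))"
    by (intro continuous_intros phi_fst)
  then have "continuous_map ?XI unit_interval (\<lambda>p. snd p * cutoff (1/4) (1/2) (phi (fst p)))"
    by (auto simp: continuous_map_in_subtopology intro!: mult_le_one)
  then have "continuous_map ?XI X (\<lambda>p. gam (snd p * cutoff (1/4) (1/2) (phi (fst p))))"
    using continuous_map_compose[OF _ continuous_gam] by (simp add: o_def)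
  then show "continuous_map (subtopology ?XI {p \<in> topspace ?XI. phi (fst p) \<le> 1}) X
      (\<lambda>p. gam (snd p * cutoff (1/4) (1/2) (phi (fst p))))"
    by (rule continuous_map_from_subtopology)
  have "continuous_map ?XI X (\<lambda>p. A (fst p, 1))"
    by (rule continuous_map_A_compose[OF continuous_map_fst]) auto
  then show "continuous_map (subtopology ?XI {p \<in> topspace ?XI. 1 \<le> phi (fst p)}) X (\<lambda>p. A (fst p, 1))"
    by (rule continuous_map_from_subtopology)
qed (auto simp: cutoff_eq_0 gam_0 A_1)

lemma loop_homotopy_0: "x \<in> topspace X \<Longrightarrow> loop_homotopy (x, 0) = A (x, 1)"
  by (simp add: loop_homotopy_def gam_0 A_1)

lemma loop_homotopy_near_base: "phi x \<le> 1/4 \<Longrightarrow> loop_homotopy (x, t) = gam t"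
  by (simp add: loop_homotopy_def cutoff_eq_1)

definition endpoint_map :: "'a \<times> 'a \<Rightarrow> 'a \<times> 'a" where
  "endpoint_map z = (A (fst z, 1), loop_homotopy (snd z, 1))"

lemma continuous_endpoint_map: "continuous_map (prod_topology X X) (prod_topology X X) endpoint_map"
  unfolding endpoint_map_def
proof (rule continuous_map_pairedI)
  show "continuous_map (prod_topology X X) X (\<lambda>z. A (fst z, 1))"
    by (rule continuous_map_A_compose[OF continuous_map_fst]) auto
  show "continuous_map (prod_topology X X) X (\<lambda>z. loop_homotopy (snd z, 1))"
    by (rule continuous_map_compose_family[OF continuous_loop_homotopy continuous_map_snd]) auto
qed

lemma endpoint_map_near_base:
  "z \<in> topspace (prod_topology X X) \<Longrightarrow> pair_gauge z \<le> 1/4 \<Longrightarrow> endpoint_map z = (x0, x0)"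
  by (auto simp: endpoint_map_def pair_gauge_def A_1 loop_homotopy_near_base gam_1)

(* The planner s is only followed up to time 1 - u; the way back is taken along
   loop_homotopy, which near the base point also runs along gam (hence the junction
   hypothesis below). Where u = 1 nothing of s is used. *)
definition pullback_planner ::
    "(('a \<times> 'a) \<times> real \<Rightarrow> 'a) \<Rightarrow> ('a \<times> 'a \<Rightarrow> real) \<Rightarrow> ('a \<times> 'a) \<times> real \<Rightarrow> 'a" where
  "pullback_planner s u = concat_family
     (concat_family (\<lambda>p. A (fst (fst p), snd p)) (\<lambda>p. s (endpoint_map (fst p), snd p * (1 - u (fst p)))))
     (concat_family (\<lambda>p. loop_homotopy (snd (fst p), (1 - snd p) * (1 - u (fst p))))
        (\<lambda>p. A (snd (fst p), 1 - snd p)))"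

lemma motion_planner_pullback_planner:
  assumes s: "motion_planner X U s"
    and W: "W \<subseteq> topspace (prod_topology X X)" "endpoint_map ` W \<subseteq> U"
    and u: "continuous_map (subtopology (prod_topology X X) W) euclideanreal u" "\<And>z. z \<in> W \<Longrightarrow> u z \<in> {0..1}"
    and junction: "\<And>z. z \<in> W \<Longrightarrow> s (endpoint_map z, 1 - u z) = loop_homotopy (snd z, 1 - u z)"
  shows "motion_planner X W (pullback_planner s u)"
proof -
  let ?Y = "prod_topology X X"
  let ?WI = "prod_topology (subtopology ?Y W) unit_interval"
  have fst_W: "continuous_map ?WI ?Y fst"
    by (rule continuous_map_into_fulltopology[OF continuous_map_fst])
  have u_fst: "continuous_map ?WI euclideanreal (\<lambda>p. u (fst p))"
    using continuous_map_compose[OF continuous_map_fst u(1)] by (simp add: o_def)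
  have u_range: "1 - u (fst p) \<in> {0..1}" if "p \<in> topspace ?WI" for p
    using that u(2)[of "fst p"] by auto
  have to_U: "continuous_map ?WI (subtopology ?Y U) (\<lambda>p. endpoint_map (fst p))"
    using continuous_map_compose[OF fst_W continuous_endpoint_map] W
    by (auto simp: continuous_map_in_subtopology o_def)
  have s_part: "continuous_map ?WI X (\<lambda>p. s (endpoint_map (fst p), snd p * (1 - u (fst p))))"
    using s unfolding motion_planner_def
    by (intro continuous_map_compose_family[OF _ to_U] continuous_intros u_fst mult_unit_interval u_range)
      auto
  have first_half: "continuous_map ?WI X
      (concat_family (\<lambda>p. A (fst (fst p), snd p)) (\<lambda>p. s (endpoint_map (fst p), snd p * (1 - u (fst p)))))"
    using continuous_map_A_families(1) s_part
    by (rule continuous_map_concat_family) (use s W in \<open>auto simp: motion_planner_def endpoint_map_def\<close>)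
  have "continuous_map ?WI X (\<lambda>p. loop_homotopy (snd (fst p), (1 - snd p) * (1 - u (fst p))))"
    by (intro continuous_map_compose_family[OF continuous_loop_homotopy continuous_map_endpoints_of_family(2)]
        continuous_intros u_fst mult_unit_interval u_range) auto
  then have second_half: "continuous_map ?WI X
      (concat_family (\<lambda>p. loop_homotopy (snd (fst p), (1 - snd p) * (1 - u (fst p))))
        (\<lambda>p. A (snd (fst p), 1 - snd p)))"
    using continuous_map_A_families(2) by (rule continuous_map_concat_family) (auto simp: loop_homotopy_0)
  have "continuous_map ?WI X (pullback_planner s u)"
    unfolding pullback_planner_def using first_half second_half
    by (rule continuous_map_concat_family) (use junction in auto)
  then show ?thesis
    using W by (auto simp: motion_planner_def pullback_planner_def A_0)
qed

lemma pullback_planner_base: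
  assumes "s ((x0, x0), 0) = x0" "u (x0, x0) = 1" "t \<in> {0..1}"
  shows "pullback_planner s u ((x0, x0), t) = x0"
proof -
  have "endpoint_map (x0, x0) = (x0, x0)"
    by (rule endpoint_map_near_base) (auto simp: x0_in phi_x0 pair_gauge_def)
  then show ?thesis
    unfolding pullback_planner_def using assms(1,2)
    by (intro concat_family_const assms(3)) (auto simp: A_x0 loop_homotopy_near_base phi_x0 gam_0)
qed

lemma motion_planner_pullback_base_weight:
  assumes s: "motion_planner X U s" and s_base: "\<And>t. t \<in> {0..1} \<Longrightarrow> s ((x0, x0), t) = gam t"
  shows "motion_planner X {z \<in> topspace (prod_topology X X). endpoint_map z \<in> U} (pullback_planner s base_weight)"
proof (rule motion_planner_pullback_planner[OF s])
  show "continuous_map (subtopology (prod_topology X X) {z \<in> topspace (prod_topology X X). endpoint_map z \<in> U})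
      euclideanreal base_weight"
    by (rule continuous_map_from_subtopology[OF continuous_base_weight])
  show "s (endpoint_map z, 1 - base_weight z) = loop_homotopy (snd z, 1 - base_weight z)"
    if "z \<in> {z \<in> topspace (prod_topology X X). endpoint_map z \<in> U}" for z
  proof (cases "base_weight z > 0")
    case True
    then have "pair_gauge z < 1/4"
      by (rule base_weight_pos_imp)
    then have "endpoint_map z = (x0, x0)" "loop_homotopy (snd z, 1 - base_weight z) = gam (1 - base_weight z)"
      using that by (auto intro: endpoint_map_near_base simp: loop_homotopy_near_base pair_gauge_def)
    then show ?thesis
      using s_base base_weight_range[of z] by auto
  next
    case False
    then have "base_weight z = 0"
      using base_weight_range[of z] by auto
    then show ?thesis
      using s that by (auto simp: motion_planner_def endpoint_map_def)
  qed
qed (use base_weight_range in blast)+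

lemma pointed_chart_at_base:
  assumes U: "openin (prod_topology X X) U" and s: "motion_planner X U s" and "(x0, x0) \<in> U"
    and s_base: "\<And>t. t \<in> {0..1} \<Longrightarrow> s ((x0, x0), t) = gam t"
  shows "pointed_chart X x0 {z \<in> topspace (prod_topology X X). endpoint_map z \<in> U} (pullback_planner s base_weight)"
proof -
  have "endpoint_map (x0, x0) = (x0, x0)"
    by (rule endpoint_map_near_base) (auto simp: x0_in phi_x0 pair_gauge_def)
  moreover have "pullback_planner s base_weight ((x0, x0), t) = x0" if "t \<in> {0..1}" for t
    using s_base[of 0] that by (intro pullback_planner_base) (auto simp: gam_0 base_weight_base)
  ultimately show ?thesis
    using openin_continuous_map_preimage[OF continuous_endpoint_map U] motion_planner_pullback_base_weight[OF s s_base]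
      \<open>(x0, x0) \<in> U\<close> x0_in
    by (simp add: pointed_chart_def)
qed

lemma pointed_chart_off_base:
  assumes s: "motion_planner X U s" and U: "openin (prod_topology X X) U"
    and B: "openin (prod_topology X X) B" "B \<subseteq> {z \<in> topspace (prod_topology X X). pair_gauge z \<le> 1}"
      "(x0, x0) \<in> B"
    and C: "closedin (prod_topology X X) C" "B \<subseteq> C"
  shows "pointed_chart X x0 (B \<union> ({z \<in> topspace (prod_topology X X). endpoint_map z \<in> U} - C))
      (\<lambda>p. if fst p \<in> B then via_base_planner p else pullback_planner s (\<lambda>_. 0) p)"
proof -
  have "openin (prod_topology X X) ({z \<in> topspace (prod_topology X X). endpoint_map z \<in> U} - C)"
    using openin_continuous_map_preimage[OF continuous_endpoint_map U] C(1) by (rule openin_diff)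
  moreover have "motion_planner X ({z \<in> topspace (prod_topology X X). endpoint_map z \<in> U} - C)
      (pullback_planner s (\<lambda>_. 0))"
    by (rule motion_planner_pullback_planner[OF s]) (use s in \<open>auto simp: motion_planner_def endpoint_map_def\<close>)
  ultimately have "motion_planner X (B \<union> ({z \<in> topspace (prod_topology X X). endpoint_map z \<in> U} - C))
      (\<lambda>p. if fst p \<in> B then via_base_planner p else pullback_planner s (\<lambda>_. 0) p)"
    using B(1) motion_planner_via_base_planner[OF B(2)] C(2)
    by (intro motion_planner_Un_disjoint) auto
  with \<open>openin _ ({z \<in> topspace (prod_topology X X). endpoint_map z \<in> U} - C)\<close> show ?thesis
    using B via_base_planner_base by (auto simp: pointed_chart_def)
qed

lemma tc_pointed_cover_of_planners:
  assumes opn: "\<And>i. i \<le> k \<Longrightarrow> openin (prod_topology X X) (U i)"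
    and planner: "\<And>i. i \<le> k \<Longrightarrow> motion_planner X (U i) (s i)"
    and cover: "topspace (prod_topology X X) \<subseteq> (\<Union>i\<le>k. U i)"
    and m: "m \<le> k" "(x0, x0) \<in> U m" "\<And>t. t \<in> {0..1} \<Longrightarrow> s m ((x0, x0), t) = gam t"
  shows "tc_pointed_cover X x0 k"
proof -
  let ?Y = "prod_topology X X"
  define V where "V i = {z \<in> topspace ?Y. endpoint_map z \<in> U i}" for i
  define C where "C = {z \<in> topspace ?Y. pair_gauge z \<le> 1/4}"
  define B where "B = {z \<in> topspace ?Y. pair_gauge z < 1/4}"
  (* C \<subseteq> V m is taken away from the other charts so that their two pieces are disjoint. *)
  define U' where "U' i = (if i = m then V m else B \<union> (V i - C))" for i
  define s' where "s' i = (if i = m then pullback_planner (s m) base_weight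
      else (\<lambda>p. if fst p \<in> B then via_base_planner p else pullback_planner (s i) (\<lambda>_. 0) p))" for i
  have "C \<subseteq> V m"
    using m(2) by (auto simp: C_def V_def endpoint_map_near_base)
  have "pointed_chart X x0 (U' i) (s' i)" if "i \<le> k" for i
  proof (cases "i = m")
    case True
    then show ?thesis
      using pointed_chart_at_base[OF opn[OF m(1)] planner[OF m(1)] m(2,3)] by (simp add: U'_def s'_def V_def)
  next
    case False
    have "closedin ?Y C"
      using closedin_continuous_map_preimage[OF continuous_pair_gauge, of "{..1/4}"] by (simp add: C_def)
    moreover have "openin ?Y B"
      using openin_continuous_map_preimage[OF continuous_pair_gauge, of "{..<1/4}"] by (simp add: B_def)
    moreover have "B \<subseteq> {z \<in> topspace ?Y. pair_gauge z \<le> 1}" "(x0, x0) \<in> B" "B \<subseteq> C"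
      by (auto simp: B_def C_def pair_gauge_def phi_x0 x0_in)
    ultimately have "pointed_chart X x0 (B \<union> (V i - C))
        (\<lambda>p. if fst p \<in> B then via_base_planner p else pullback_planner (s i) (\<lambda>_. 0) p)"
      unfolding V_def by (intro pointed_chart_off_base[OF planner[OF that] opn[OF that]])
    then show ?thesis
      using False by (simp add: U'_def s'_def)
  qed
  moreover have "topspace ?Y \<subseteq> (\<Union>i\<le>k. U' i)"
  proof
    fix z assume z: "z \<in> topspace ?Y"
    then obtain j where "j \<le> k" "endpoint_map z \<in> U j"
      using cover continuous_map_image_subset_topspace[OF continuous_endpoint_map] by blast
    then show "z \<in> (\<Union>i\<le>k. U' i)"
      using z m(1) \<open>C \<subseteq> V m\<close> by (cases "z \<in> C"; cases "j = m") (auto simp: U'_def V_def)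
  qed
  ultimately show ?thesis
    unfolding tc_pointed_cover_iff_pointed_charts by blast
qed

end

lemma (in based_collapse) tc_pointed_cover_of_tc_cover:
  assumes "tc_cover X k"
  shows "tc_pointed_cover X x0 k"
proof -
  obtain U s where Us: "\<forall>i\<le>k. openin (prod_topology X X) (U i) \<and> motion_planner X (U i) (s i)"
    and cover: "topspace (prod_topology X X) \<subseteq> (\<Union>i\<le>k. U i)"
    using assms unfolding tc_cover_def by blast
  obtain m where m: "m \<le> k" "(x0, x0) \<in> U m"
    using cover x0_in by auto
  then have planner_m: "motion_planner X (U m) (s m)"
    using Us by blast
  have "continuous_map unit_interval (prod_topology (subtopology (prod_topology X X) (U m)) unit_interval)
      (\<lambda>t. ((x0, x0), t))"
    using m(2) x0_in by (intro continuous_map_pairedI) auto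
  then have "continuous_map unit_interval X (\<lambda>t. s m ((x0, x0), t))"
    using continuous_map_compose planner_m unfolding motion_planner_def o_def by fast
  moreover have "s m ((x0, x0), 0) = x0" "s m ((x0, x0), 1) = x0"
    using planner_m m(2) by (auto simp: motion_planner_def)
  ultimately interpret based_collapse_loop X x0 phi A "\<lambda>t. s m ((x0, x0), t)"
    by unfold_locales
  show ?thesis
    using Us by (intro tc_pointed_cover_of_planners[OF _ _ cover m]) auto
qed

theorem mainTheorem11:
  fixes X :: "'a topology" and x0 :: 'a
  assumes "path_connected_space X"
    and "locally_equiconnected X"
    and "x0 \<in> topspace X"
  shows "TC X = TC_pointed X x0"
proof -
  obtain phi A where collapse: "based_collapse X x0 phi A"
    using locally_equiconnected_imp_based_collapse[OF assms(2,3)] .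
  have "tc_cover X = tc_pointed_cover X x0"
  proof (intro ext iffI)
    show "tc_pointed_cover X x0 k" if "tc_cover X k" for k
      using collapse that by (rule based_collapse.tc_pointed_cover_of_tc_cover)
    show "tc_cover X k" if "tc_pointed_cover X x0 k" for k
      using that by (rule tc_pointed_cover_imp_tc_cover)
  qed
  then show ?thesis
    by (simp add: TC_def TC_pointed_def)
qed

end
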